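(* Let $m,n$ be positive integers and $(A,\boldsymbol{\gamma})\in[0,1)^{m\times n}\times[0,1)^m$. If $\langle A\boldsymbol{q}-\boldsymbol{\gamma}\rangle>0$ for every $\boldsymbol{q}\in\mathbb{Z}^n\setminus\{\boldsymbol{0}\}$, then either $S_l(A,\boldsymbol{\gamma})<\infty$ for all $l\in\mathbb{N}$, or $S_l(A,\boldsymbol{\gamma})=\infty$ for all $l\in\mathbb{N}$.
   Context: $[0,1)^{m\times n}$ is the set of real $m\times n$ matrices with entries in $[0,1)$. For $\boldsymbol{x}\in\mathbb{R}^n$, $\|\boldsymbol{x}\|=\max_i|x_i|$; for $\boldsymbol{y}\in\mathbb{R}^m$, $\langle\boldsymbol{y}\rangle=\min_{\boldsymbol{p}\in\mathbb{Z}^m}\|\boldsymbol{y}-\boldsymbol{p}\|$. For $l\in\mathbb{N}$, $S_l(A,\boldsymbol{\gamma})=\sum_{t=l}^\infty t^{n-1}\min_{\boldsymbol{q}\in\mathbb{Z}^n,\ l\le\|\boldsymbol{q}\|\le t}\langle A\boldsymbol{q}-\boldsymbol{\gamma}\rangle^m$. *)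

theory Defs
  imports "HOL-Analysis.Analysis"
begin

definition int_supnorm :: "int ^ 'n \<Rightarrow> int" where
  "int_supnorm q = Max (range (\<lambda>i. \<bar>q $ i\<bar>))"

definition real_supnorm :: "real ^ 'm \<Rightarrow> real" where
  "real_supnorm y = Max (range (\<lambda>i. \<bar>y $ i\<bar>))"

definition dist_Zm :: "real ^ 'm \<Rightarrow> real" where
  "dist_Zm y = Inf {real_supnorm (y - (\<chi> i. real_of_int (p $ i))) | p :: int ^ 'm. True}"

definition lin_form :: "real ^ 'n ^ 'm \<Rightarrow> real ^ 'm \<Rightarrow> int ^ 'n \<Rightarrow> real ^ 'm" where
  "lin_form A \<gamma> q = A *v (\<chi> j. real_of_int (q $ j)) - \<gamma>"

definition S_sum :: "nat \<Rightarrow> real ^ 'n ^ 'm \<Rightarrow> real ^ 'm \<Rightarrow> ennreal" where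
  "S_sum l A \<gamma> = (\<Sum>t. if l \<le> t then
      ennreal (real t ^ (CARD('n) - 1) *
        Min {dist_Zm (lin_form A \<gamma> q) ^ CARD('m) | q :: int ^ 'n.
               int l \<le> int_supnorm q \<and> int_supnorm q \<le> int t})
    else 0)"

end

theory Submission
  imports Defs
begin

text \<open>Let \<open>\<mu>(l, t)\<close> be the minimum of \<open>\<langle>Aq - \<gamma>\<rangle>^m\<close> over the finite shell
  \<open>l \<le> \<parallel>q\<parallel> \<le> t\<close>, so \<open>S_l = \<Sum>t\<ge>l. t^(n-1) \<mu>(l, t)\<close>. For \<open>1 \<le> l \<le> l' \<le> t\<close>, shrinking the shell
  gives \<open>\<mu>(l, t) \<le> \<mu>(l', t)\<close>. Conversely, a minimiser for \<open>\<mu>(l, t)\<close> either lies in the thinner shell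
  \<open>l' \<le> \<parallel>q\<parallel> \<le> t\<close>, or has norm below \<open>l'\<close>, and then \<open>\<mu>(l, t) \<ge> \<mu>(l, l') > 0\<close> because the finite
  shell \<open>l \<le> \<parallel>q\<parallel> \<le> l'\<close> avoids \<open>q = 0\<close>. Either way \<open>\<mu>(l', t) \<le> K \<mu>(l, t)\<close> with
  \<open>K = max 1 (\<mu>(l', l') / \<mu>(l, l'))\<close>, so the summands of \<open>S_l\<close> and \<open>S_l'\<close> are comparable from
  \<open>t = l'\<close> on.\<close>

lemma int_supnorm_const: "int_supnorm (\<chi> i::'n::finite. c) = \<bar>c\<bar>"
  unfolding int_supnorm_def by simp

lemma abs_le_int_supnorm: "\<bar>q $ i\<bar> \<le> int_supnorm q"
  unfolding int_supnorm_def by (rule Max_ge) auto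

definition int_shell :: "nat \<Rightarrow> nat \<Rightarrow> (int ^ 'n) set" where
  "int_shell l t = {q. int l \<le> int_supnorm q \<and> int_supnorm q \<le> int t}"

lemma finite_int_shell: "finite (int_shell l t)"
proof (rule finite_subset)
  show "int_shell l t \<subseteq> vec_lambda ` (UNIV \<rightarrow>\<^sub>E {-int t..int t})"
  proof
    fix q :: "int ^ 'n" assume "q \<in> int_shell l t"
    then have "q $ i \<in> {-int t..int t}" for i
      using abs_le_int_supnorm[of q i] by (simp add: int_shell_def abs_le_iff)
    then have "vec_nth q \<in> UNIV \<rightarrow>\<^sub>E {-int t..int t}" by (simp add: PiE_iff)
    then show "q \<in> vec_lambda ` (UNIV \<rightarrow>\<^sub>E {-int t..int t})"
      by (rule image_eqI[rotated]) simp
  qed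
qed (intro finite_imageI finite_PiE; simp)

lemma zero_notin_int_shell: "1 \<le> l \<Longrightarrow> 0 \<notin> int_shell l t"
  by (simp add: int_shell_def zero_vec_def int_supnorm_const)

lemma int_shell_nonempty: "l \<le> t \<Longrightarrow> int_shell l t \<noteq> {}"
proof -
  assume "l \<le> t"
  then have "(\<chi> i. int l) \<in> int_shell l t" by (simp add: int_shell_def int_supnorm_const)
  then show ?thesis by blast
qed

lemma int_shell_mono: "l \<le> l' \<Longrightarrow> t' \<le> t \<Longrightarrow> int_shell l' t' \<subseteq> int_shell l t"
  unfolding int_shell_def by auto

definition shell_min :: "(int ^ 'n \<Rightarrow> real) \<Rightarrow> nat \<Rightarrow> nat \<Rightarrow> real" where
  "shell_min f l t = Min (f ` int_shell l t)"

lemma shell_min_le: "q \<in> int_shell l t \<Longrightarrow> shell_min f l t \<le> f q"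
  unfolding shell_min_def by (simp add: finite_int_shell)

lemma shell_min_attained:
  assumes "l \<le> t"
  obtains q where "q \<in> int_shell l t" "shell_min f l t = f q"
proof -
  have "shell_min f l t \<in> f ` int_shell l t"
    unfolding shell_min_def using finite_int_shell int_shell_nonempty[OF assms] by (intro Min_in) auto
  then show ?thesis using that by blast
qed

lemma shell_min_antimono:
  assumes "l \<le> l'" "l' \<le> t'" "t' \<le> t"
  shows "shell_min f l t \<le> shell_min f l' t'"
proof -
  obtain q where q: "q \<in> int_shell l' t'" "shell_min f l' t' = f q"
    using shell_min_attained[OF assms(2)] .
  then have "q \<in> int_shell l t" using int_shell_mono[OF assms(1,3)] by blast
  then show ?thesis unfolding q(2) by (rule shell_min_le)
qed

lemma shell_min_pos:
  assumes "\<And>q. q \<noteq> 0 \<Longrightarrow> 0 < f q" "1 \<le> l" "l \<le> t"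
  shows "0 < shell_min f l t"
proof -
  obtain q where "q \<in> int_shell l t" "shell_min f l t = f q"
    using shell_min_attained[OF assms(3)] .
  then show ?thesis using assms(1) zero_notin_int_shell[OF assms(2)] by metis
qed

lemma shell_min_le_cmult:
  assumes fpos: "\<And>q. q \<noteq> 0 \<Longrightarrow> 0 < f q" and "1 \<le> l" "l \<le> l'"
  shows "\<exists>K. \<forall>t \<ge> l'. shell_min f l' t \<le> K * shell_min f l t"
proof -
  define c where "c = shell_min f l l'"
  define K where "K = max 1 (shell_min f l' l' / c)"
  have "0 < c" unfolding c_def using shell_min_pos[OF fpos assms(2,3)] .
  have "shell_min f l' t \<le> K * shell_min f l t" if "l' \<le> t" for t
  proof -
    obtain q where q: "q \<in> int_shell l t" "shell_min f l t = f q"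
      using shell_min_attained \<open>l \<le> l'\<close> \<open>l' \<le> t\<close> by (metis order_trans)
    have "0 < f q" using fpos zero_notin_int_shell[OF \<open>1 \<le> l\<close>] q(1) by metis
    show "shell_min f l' t \<le> K * shell_min f l t"
    proof (cases "int l' \<le> int_supnorm q")
      case True
      then have "q \<in> int_shell l' t" using q(1) by (simp add: int_shell_def)
      then have "shell_min f l' t \<le> f q" by (rule shell_min_le)
      also have "\<dots> \<le> K * f q" using \<open>0 < f q\<close> by (simp add: K_def)
      finally show ?thesis unfolding q(2) .
    next
      case False
      then have "q \<in> int_shell l l'" using q(1) by (simp add: int_shell_def)
      then have "c \<le> f q" unfolding c_def by (rule shell_min_le)
      have "shell_min f l' t \<le> shell_min f l' l'"
        using \<open>l' \<le> t\<close> by (intro shell_min_antimono) auto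
      also have "\<dots> = (shell_min f l' l' / c) * c" using \<open>0 < c\<close> by simp
      also have "\<dots> \<le> K * c" using \<open>0 < c\<close> by (intro mult_right_mono) (auto simp: K_def)
      also have "\<dots> \<le> K * f q" using \<open>c \<le> f q\<close> by (intro mult_left_mono) (auto simp: K_def)
      finally show ?thesis unfolding q(2) .
    qed
  qed
  then show ?thesis by blast
qed

definition shell_term :: "(int ^ 'n \<Rightarrow> real) \<Rightarrow> nat \<Rightarrow> nat \<Rightarrow> nat \<Rightarrow> real" where
  "shell_term f k l t = (if l \<le> t then real t ^ k * shell_min f l t else 0)"

lemma shell_term_nonneg:
  assumes "\<And>q. q \<noteq> 0 \<Longrightarrow> 0 < f q" "1 \<le> l"
  shows "0 \<le> shell_term f k l t"
  using shell_min_pos[where f=f and t=t, OF assms] by (auto simp: shell_term_def zero_le_mult_iff)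

lemma summable_shell_term_iff:
  assumes fpos: "\<And>q. q \<noteq> 0 \<Longrightarrow> 0 < f q" and "1 \<le> l" "l \<le> l'"
  shows "summable (shell_term f k l) \<longleftrightarrow> summable (shell_term f k l')"
proof
  assume "summable (shell_term f k l)"
  obtain K where K: "\<forall>t \<ge> l'. shell_min f l' t \<le> K * shell_min f l t"
    using shell_min_le_cmult[where f=f, OF assms] by blast
  have "summable (\<lambda>t. K * shell_term f k l t)"
    using \<open>summable (shell_term f k l)\<close> by (rule summable_mult)
  moreover have "norm (shell_term f k l' t) \<le> K * shell_term f k l t" if "l' \<le> t" for t
  proof -
    have "norm (shell_term f k l' t) = real t ^ k * shell_min f l' t"
      using shell_term_nonneg[where f=f and l=l' and k=k and t=t, OF fpos] assms that
      by (simp add: shell_term_def)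
    also have "\<dots> \<le> real t ^ k * (K * shell_min f l t)"
      using K that by (simp add: mult_left_mono)
    also have "\<dots> = K * shell_term f k l t"
      using assms that by (simp add: shell_term_def)
    finally show ?thesis .
  qed
  ultimately show "summable (shell_term f k l')" by (rule summable_comparison_test')
next
  assume "summable (shell_term f k l')"
  moreover have "norm (shell_term f k l t) \<le> shell_term f k l' t" if "l' \<le> t" for t
  proof -
    have "norm (shell_term f k l t) = real t ^ k * shell_min f l t"
      using shell_term_nonneg[where f=f and l=l and k=k and t=t, OF fpos] assms that
      by (simp add: shell_term_def)
    also have "\<dots> \<le> real t ^ k * shell_min f l' t"
      using assms that by (intro mult_left_mono shell_min_antimono) auto
    also have "\<dots> = shell_term f k l' t"
      using that by (simp add: shell_term_def)
    finally show ?thesis .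
  qed
  ultimately show "summable (shell_term f k l)" by (rule summable_comparison_test')
qed

lemma ennreal_suminf_less_top_iff:
  assumes "\<And>i. 0 \<le> f i"
  shows "(\<Sum>i. ennreal (f i)) < \<infinity> \<longleftrightarrow> summable f"
proof
  assume "(\<Sum>i. ennreal (f i)) < \<infinity>"
  then show "summable f" using summable_suminf_not_top[OF assms] by simp
next
  assume "summable f"
  then show "(\<Sum>i. ennreal (f i)) < \<infinity>"
    using ennreal_suminf_neq_top[OF _ assms] by (simp add: less_top)
qed

lemma S_sum_eq_shell_term:
  fixes A :: "real ^ 'n ^ 'm" and \<gamma> :: "real ^ 'm"
  shows "S_sum l A \<gamma> = (\<Sum>t. ennreal (shell_term (\<lambda>q. dist_Zm (lin_form A \<gamma> q) ^ CARD('m)) (CARD('n) - 1) l t))"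
  unfolding S_sum_def shell_term_def shell_min_def int_shell_def image_Collect
  by (intro suminf_cong) simp

theorem lemma2p2:
  fixes A :: "real ^ 'n ^ 'm" and \<gamma> :: "real ^ 'm"
  assumes A_range: "\<forall>i j. 0 \<le> A $ i $ j \<and> A $ i $ j < 1"
    and \<gamma>_range: "\<forall>i. 0 \<le> \<gamma> $ i \<and> \<gamma> $ i < 1"
    and pos: "\<forall>q :: int ^ 'n. q \<noteq> 0 \<longrightarrow> dist_Zm (lin_form A \<gamma> q) > 0"
  shows "(\<forall>l::nat. l \<ge> 1 \<longrightarrow> S_sum l A \<gamma> < \<infinity>) \<or> (\<forall>l::nat. l \<ge> 1 \<longrightarrow> S_sum l A \<gamma> = \<infinity>)"
proof -
  define f where "f = (\<lambda>q :: int ^ 'n. dist_Zm (lin_form A \<gamma> q) ^ CARD('m))"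
  define k where "k = CARD('n) - 1"
  have fpos: "q \<noteq> 0 \<Longrightarrow> 0 < f q" for q
    using pos by (simp add: f_def)
  have "S_sum l A \<gamma> < \<infinity> \<longleftrightarrow> summable (shell_term f k 1)" if "1 \<le> l" for l
  proof -
    have "S_sum l A \<gamma> < \<infinity> \<longleftrightarrow> summable (shell_term f k l)"
      unfolding S_sum_eq_shell_term f_def[symmetric] k_def[symmetric]
      by (intro ennreal_suminf_less_top_iff shell_term_nonneg fpos that)
    also have "\<dots> \<longleftrightarrow> summable (shell_term f k 1)"
      by (rule summable_shell_term_iff[symmetric]) (use fpos that in auto)
    finally show ?thesis .
  qed
  then show ?thesis by (auto simp flip: less_top)
qed

end
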